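(* Let $\nu \geq 1$, let $\Psi \neq \emptyset$ be a set, let $n\in\mathbb N$ and let $W_1,\dots,W_n:\Omega \to \ell^\infty(\Psi)$ be arbitrary (not necessarily measurable) maps on a probability space $(\Omega,\Upsilon,P)$. For $1\le i\le j\le n$ and $\psi\in\Psi$ put $S_{i,j}^W(\psi)=\sum_{k=i}^j W_k(\psi)$ and $M_{i,j}^W(\psi)=\max_{k=i,\dots,j}|S_{i,k}^W(\psi)|$. Let $\alpha>1$ and let $g:\mathbb N\to\mathbb R$ be such that the pair $(\alpha,g)$ fulfills condition (S) with some index $Q\in[1,2^{(\alpha-1)/\alpha})$. Suppose that for all $1\le i\le j\le n$, $$\mathrm E^*\Big\{\sup_{\psi\in\Psi}|S_{i,j}^W(\psi)|^\nu\Big\}\le g^{\alpha}(j-i+1).$$ Then there exists a constant $A$ depending only on $\alpha,\nu$ and $Q$ such that for all $1\le i\le j\le n$, $$\mathrm E^*\Big\{\sup_{\psi\in\Psi}|M_{i,j}^W(\psi)|^\nu\Big\}\le A\, g^{\alpha}(j-i+1).$$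
   Context: $\ell^\infty(\Psi)$ is the space of bounded real functions on $\Psi$ with the sup norm. $\mathrm E^*$ denotes outer expectation: for an arbitrary map $Y:\Omega\to\mathbb R$, $\mathrm E^*\{Y\}=\inf\{\mathrm E\{U\}: U\ge Y,\ U:\Omega\to[-\infty,\infty] \text{ measurable},\ \mathrm E\{U\}\text{ exists}\}$. Condition (S): for $\alpha>1$ and $g:\mathbb N\to\mathbb R$, the pair $(\alpha,g)$ fulfills condition (S) with index $Q\in[1,2^{(\alpha-1)/\alpha})$ if (i) $g\ge 0$, (ii) $g$ is nondecreasing, and (iii) for each $1\le i<j$, $g(i)+g(j-i)\le Q\,g(j)$. *)

theory Defs
  imports "HOL-Probability.Probability"
begin

definition ereal_expect :: "'a measure \<Rightarrow> ('a \<Rightarrow> ereal) \<Rightarrow> ereal" where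
  "ereal_expect M U =
     enn2ereal (\<integral>\<^sup>+x. e2ennreal (U x) \<partial>M) - enn2ereal (\<integral>\<^sup>+x. e2ennreal (- U x) \<partial>M)"

definition expect_exists :: "'a measure \<Rightarrow> ('a \<Rightarrow> ereal) \<Rightarrow> bool" where
  "expect_exists M U \<longleftrightarrow>
     \<not> ((\<integral>\<^sup>+x. e2ennreal (U x) \<partial>M) = \<infinity> \<and> (\<integral>\<^sup>+x. e2ennreal (- U x) \<partial>M) = \<infinity>)"

definition outer_exp :: "'a measure \<Rightarrow> ('a \<Rightarrow> ereal) \<Rightarrow> ereal" where
  "outer_exp M Y = Inf {ereal_expect M U | U. U \<in> borel_measurable M \<and>
      (\<forall>x\<in>space M. Y x \<le> U x) \<and> expect_exists M U}"

definition Ssum :: "(nat \<Rightarrow> 'a \<Rightarrow> 'p \<Rightarrow> real) \<Rightarrow> nat \<Rightarrow> nat \<Rightarrow> 'a \<Rightarrow> 'p \<Rightarrow> real" where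
  "Ssum W i j \<omega> \<psi> = (\<Sum>k=i..j. W k \<omega> \<psi>)"

definition Mmax :: "(nat \<Rightarrow> 'a \<Rightarrow> 'p \<Rightarrow> real) \<Rightarrow> nat \<Rightarrow> nat \<Rightarrow> 'a \<Rightarrow> 'p \<Rightarrow> real" where
  "Mmax W i j \<omega> \<psi> = Max ((\<lambda>k. \<bar>Ssum W i k \<omega> \<psi>\<bar>) ` {i..j})"

definition cond_S :: "real \<Rightarrow> (nat \<Rightarrow> real) \<Rightarrow> real \<Rightarrow> bool" where
  "cond_S \<alpha> g Q \<longleftrightarrow> \<alpha> > 1 \<and> 1 \<le> Q \<and> Q < 2 powr ((\<alpha> - 1) / \<alpha>) \<and>
     (\<forall>m\<ge>1. g m \<ge> 0) \<and>
     (\<forall>m m'. 1 \<le> m \<and> m \<le> m' \<longrightarrow> g m \<le> g m') \<and>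
     (\<forall>i j. 1 \<le> i \<and> i < j \<longrightarrow> g i + g (j - i) \<le> Q * g j)"

end

theory Submission
  imports Defs
begin

text \<open>Split the block i..j at its middle index m. Every partial sum S_{i,k} is either a
  partial sum of the left block or S_{i,m} plus a partial sum of the right block, hence
  M_{i,j} \<le> |S_{i,m}| + max (M_{i,m-1}) (M_{m+1,j}). Convexity of x powr \<nu> gives
  (x + y) powr \<nu> \<le> C1 x powr \<nu> + C2 y powr \<nu> with C2 as close to 1 as we like, and outer
  expectation is monotone, subadditive and positively homogeneous on nonnegative maps.
  Condition (S) bounds g at half the length by (Q/2) g N, and Q < 2 powr ((\<alpha> - 1)/\<alpha>) says
  exactly that c = 2 (Q/2) powr \<alpha> < 1. Induction on the length then goes through for any
  A with C1 + C2 c A \<le> A.\<close>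

lemma ereal_expect_enn2ereal:
  "ereal_expect M (\<lambda>x. enn2ereal (V x)) = enn2ereal (\<integral>\<^sup>+x. V x \<partial>M)"
  "expect_exists M (\<lambda>x. enn2ereal (V x))"
proof -
  have "(\<integral>\<^sup>+x. e2ennreal (- enn2ereal (V x)) \<partial>M) = 0"
    by (subst e2ennreal_neg) auto
  then show "ereal_expect M (\<lambda>x. enn2ereal (V x)) = enn2ereal (\<integral>\<^sup>+x. V x \<partial>M)"
    "expect_exists M (\<lambda>x. enn2ereal (V x))"
    unfolding ereal_expect_def expect_exists_def by (auto simp: zero_ennreal.rep_eq)
qed

lemma outer_exp_le_nn_integral:
  assumes "V \<in> borel_measurable M" "\<forall>x\<in>space M. Y x \<le> enn2ereal (V x)"
  shows "outer_exp M Y \<le> enn2ereal (\<integral>\<^sup>+x. V x \<partial>M)"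
  unfolding outer_exp_def
proof (rule Inf_lower)
  show "enn2ereal (\<integral>\<^sup>+x. V x \<partial>M) \<in> {ereal_expect M U | U. U \<in> borel_measurable M \<and>
      (\<forall>x\<in>space M. Y x \<le> U x) \<and> expect_exists M U}"
    using assms ereal_expect_enn2ereal[of M V] by (intro CollectI exI[of _ "\<lambda>x. enn2ereal (V x)"]) auto
qed

lemma outer_exp_nonneg_less_obtains:
  assumes "\<forall>x\<in>space M. 0 \<le> Y x" "outer_exp M Y < r"
  obtains V where "V \<in> borel_measurable M" "\<forall>x\<in>space M. Y x \<le> enn2ereal (V x)"
    "enn2ereal (\<integral>\<^sup>+x. V x \<partial>M) < r"
proof -
  obtain U where U: "U \<in> borel_measurable M" "\<forall>x\<in>space M. Y x \<le> U x" "ereal_expect M U < r"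
    using assms(2) unfolding outer_exp_def Inf_less_iff by blast
  have U0: "\<forall>x\<in>space M. 0 \<le> U x" using U(2) assms(1) by (meson order.trans)
  have "(\<integral>\<^sup>+x. e2ennreal (- U x) \<partial>M) = (\<integral>\<^sup>+x. 0 \<partial>M)"
    using U0 by (intro nn_integral_cong) (simp add: e2ennreal_neg)
  then have "ereal_expect M U = enn2ereal (\<integral>\<^sup>+x. e2ennreal (U x) \<partial>M)"
    unfolding ereal_expect_def by (simp add: zero_ennreal.rep_eq)
  then show ?thesis
    using U U0 by (intro that[of "\<lambda>x. e2ennreal (U x)"]) (auto simp: enn2ereal_e2ennreal)
qed

lemma outer_exp_mono:
  assumes "\<forall>x\<in>space M. Y x \<le> Z x"
  shows "outer_exp M Y \<le> outer_exp M Z"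
  unfolding outer_exp_def using assms by (intro Inf_superset_mono) (auto intro: order.trans)

lemma outer_exp_zero: "outer_exp M (\<lambda>_. 0) \<le> 0"
  using outer_exp_le_nn_integral[of "\<lambda>_. 0" M "\<lambda>_. 0"] by (simp add: zero_ennreal.rep_eq)

lemma outer_exp_add:
  assumes "\<forall>x\<in>space M. 0 \<le> Y1 x" "\<forall>x\<in>space M. 0 \<le> Y2 x"
    and "outer_exp M Y1 \<le> ereal r1" "outer_exp M Y2 \<le> ereal r2"
  shows "outer_exp M (\<lambda>x. Y1 x + Y2 x) \<le> ereal (r1 + r2)"
proof (rule ereal_le_epsilon2)
  fix d :: real assume "0 < d"
  then have "outer_exp M Y1 < ereal (r1 + d/2)" "outer_exp M Y2 < ereal (r2 + d/2)"
    using assms(3,4) by (auto intro: order.strict_trans1)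
  then obtain V1 V2 where
      V1: "V1 \<in> borel_measurable M" "\<forall>x\<in>space M. Y1 x \<le> enn2ereal (V1 x)"
        "enn2ereal (\<integral>\<^sup>+x. V1 x \<partial>M) < ereal (r1 + d/2)"
    and V2: "V2 \<in> borel_measurable M" "\<forall>x\<in>space M. Y2 x \<le> enn2ereal (V2 x)"
        "enn2ereal (\<integral>\<^sup>+x. V2 x \<partial>M) < ereal (r2 + d/2)"
    using assms(1,2) by (metis outer_exp_nonneg_less_obtains)
  have "outer_exp M (\<lambda>x. Y1 x + Y2 x) \<le> enn2ereal (\<integral>\<^sup>+x. V1 x + V2 x \<partial>M)"
    using V1 V2 by (intro outer_exp_le_nn_integral) (auto intro: add_mono simp: plus_ennreal.rep_eq)
  also have "\<dots> = enn2ereal (\<integral>\<^sup>+x. V1 x \<partial>M) + enn2ereal (\<integral>\<^sup>+x. V2 x \<partial>M)"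
    using V1(1) V2(1) by (simp add: nn_integral_add plus_ennreal.rep_eq)
  also have "\<dots> \<le> ereal (r1 + d/2) + ereal (r2 + d/2)"
    using V1(3) V2(3) by (intro add_mono) auto
  finally show "outer_exp M (\<lambda>x. Y1 x + Y2 x) \<le> ereal (r1 + r2) + ereal d"
    by (simp add: add_ac)
qed

lemma outer_exp_cmult:
  assumes "\<forall>x\<in>space M. 0 \<le> Y x" "0 \<le> c" "outer_exp M Y \<le> ereal r"
  shows "outer_exp M (\<lambda>x. ereal c * Y x) \<le> ereal (c * r)"
proof (rule ereal_le_epsilon2)
  fix d :: real assume "0 < d"
  define e where "e = d / (c + 1)"
  have "0 < e" "c * e \<le> d"
    using \<open>0 < d\<close> assms(2) by (auto simp: e_def field_simps)
  then have "outer_exp M Y < ereal (r + e)"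
    using assms(3) by (auto intro: order.strict_trans1)
  then obtain V where V: "V \<in> borel_measurable M" "\<forall>x\<in>space M. Y x \<le> enn2ereal (V x)"
      "enn2ereal (\<integral>\<^sup>+x. V x \<partial>M) < ereal (r + e)"
    using assms(1) by (metis outer_exp_nonneg_less_obtains)
  have "outer_exp M (\<lambda>x. ereal c * Y x) \<le> enn2ereal (\<integral>\<^sup>+x. ennreal c * V x \<partial>M)"
    using V assms(2)
    by (intro outer_exp_le_nn_integral) (auto intro: ereal_mult_left_mono simp: times_ennreal.rep_eq)
  also have "\<dots> = ereal c * enn2ereal (\<integral>\<^sup>+x. V x \<partial>M)"
    using V(1) assms(2) by (simp add: nn_integral_cmult times_ennreal.rep_eq)
  also have "\<dots> \<le> ereal c * ereal (r + e)"
    using V(3) assms(2) by (intro ereal_mult_left_mono) auto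
  also have "\<dots> \<le> ereal (c * r) + ereal d"
    using \<open>c * e \<le> d\<close> by (simp add: algebra_simps)
  finally show "outer_exp M (\<lambda>x. ereal c * Y x) \<le> ereal (c * r) + ereal d" .
qed

lemma powr_add_le_weighted:
  fixes x y t \<nu> :: real
  assumes "1 \<le> \<nu>" "0 < t" "t < 1" "0 \<le> x" "0 \<le> y"
  shows "(x + y) powr \<nu> \<le> t powr (1 - \<nu>) * x powr \<nu> + (1 - t) powr (1 - \<nu>) * y powr \<nu>"
proof -
  have rescale: "s * (z / s) powr \<nu> = s powr (1 - \<nu>) * z powr \<nu>" if "0 < s" "0 \<le> z" for s z :: real
    using that by (simp add: powr_divide powr_diff)
  have weight: "1 \<le> s powr (1 - \<nu>)" if "0 < s" "s \<le> 1" for s :: real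
    using powr_mono2'[of "1 - \<nu>" s 1] that assms(1) by simp
  consider "x = 0 \<or> y = 0" | "0 < x" "0 < y" using assms(4,5) by linarith
  then show ?thesis
  proof cases
    case 1
    then show ?thesis
      using weight[of t] weight[of "1 - t"] assms(2,3) by (auto simp: mult_le_cancel_right1)
  next
    case 2
    have "(\<lambda>z. z powr \<nu>) ((1 - (1 - t)) *\<^sub>R (x / t) + (1 - t) *\<^sub>R (y / (1 - t)))
        \<le> (1 - (1 - t)) * (\<lambda>z. z powr \<nu>) (x / t) + (1 - t) * (\<lambda>z. z powr \<nu>) (y / (1 - t))"
      using assms 2 by (intro convex_onD[OF powr_convex[OF assms(1)]]) auto
    then show ?thesis
      using assms by (simp add: rescale)
  qed
qed

lemma powr_add_le_contracting:
  fixes c \<nu> :: real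
  assumes "0 < c" "c < 1" "1 \<le> \<nu>"
  obtains C1 C2 where "C2 * c < 1"
    "\<And>x y. 0 \<le> x \<Longrightarrow> 0 \<le> y \<Longrightarrow> (x + y) powr \<nu> \<le> C1 * x powr \<nu> + C2 * y powr \<nu>"
proof -
  define s where "s = c powr (1 / \<nu>)"
  have s: "0 < s" "s < 1" unfolding s_def using assms by (auto simp: powr01_less_one)
  have "s powr (1 - \<nu>) * c = c powr ((1 / \<nu>) * (1 - \<nu>) + 1)"
    unfolding s_def using assms by (simp add: powr_powr powr_add)
  also have "(1 / \<nu>) * (1 - \<nu>) + 1 = 1 / \<nu>" using assms by (simp add: field_simps)
  finally have "s powr (1 - \<nu>) * c < 1" using s unfolding s_def by simp
  then show ?thesis
    using that[of "s powr (1 - \<nu>)" "(1 - s) powr (1 - \<nu>)"] powr_add_le_weighted[OF assms(3), of "1 - s"] s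
    by simp
qed

lemma two_mult_half_powr_less_one:
  fixes \<alpha> Q :: real
  assumes "0 < \<alpha>" "0 \<le> Q" "Q < 2 powr ((\<alpha> - 1) / \<alpha>)"
  shows "2 * (Q / 2) powr \<alpha> < 1"
proof -
  have "Q powr \<alpha> < (2 powr ((\<alpha> - 1) / \<alpha>)) powr \<alpha>"
    using assms by (intro powr_less_mono2) auto
  also have "\<dots> = 2 powr (\<alpha> - 1)" using assms by (simp add: powr_powr)
  finally show ?thesis using assms by (simp add: powr_divide powr_diff field_simps)
qed

lemma cond_S_powr_mono:
  assumes "cond_S \<alpha> g Q" "1 \<le> k" "k \<le> N"
  shows "g k powr \<alpha> \<le> g N powr \<alpha>"
  using assms unfolding cond_S_def by (intro powr_mono2) auto

lemma cond_S_powr_half: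
  assumes S: "cond_S \<alpha> g Q" and "1 \<le> k" "2 * k \<le> N"
  shows "g k powr \<alpha> \<le> (Q / 2) powr \<alpha> * g N powr \<alpha>"
proof -
  have Q: "1 \<le> Q" and g0: "\<And>m. 1 \<le> m \<Longrightarrow> 0 \<le> g m"
    using S unfolding cond_S_def by auto
  have sub: "\<forall>i j. 1 \<le> i \<and> i < j \<longrightarrow> g i + g (j - i) \<le> Q * g j"
    using S unfolding cond_S_def by blast
  have "g k + g (2 * k - k) \<le> Q * g (2 * k)"
    using sub[rule_format, of k "2 * k"] assms(2) by simp
  also have "\<dots> \<le> Q * g N"
    using S assms Q unfolding cond_S_def by (intro mult_left_mono) auto
  finally have "g k \<le> Q / 2 * g N" by simp
  then have "g k powr \<alpha> \<le> (Q / 2 * g N) powr \<alpha>"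
    using S g0 assms(2) unfolding cond_S_def by (intro powr_mono2) auto
  also have "\<dots> = (Q / 2) powr \<alpha> * g N powr \<alpha>"
    using Q g0[of N] assms(2,3) by (subst powr_mult) auto
  finally show ?thesis .
qed

lemma Mmax_ge: "k \<in> {i..j} \<Longrightarrow> \<bar>Ssum W i k \<omega> \<psi>\<bar> \<le> Mmax W i j \<omega> \<psi>"
  unfolding Mmax_def by (rule Max_ge) auto

lemma Mmax_nonneg: "i \<le> j \<Longrightarrow> 0 \<le> Mmax W i j \<omega> \<psi>"
  using Mmax_ge[of i i j W \<omega> \<psi>] by auto

lemma Mmax_same: "Mmax W i i \<omega> \<psi> = \<bar>Ssum W i i \<omega> \<psi>\<bar>"
  unfolding Mmax_def by simp

lemma Ssum_split: "i \<le> m \<Longrightarrow> m < k \<Longrightarrow> Ssum W i k \<omega> \<psi> = Ssum W i m \<omega> \<psi> + Ssum W (m + 1) k \<omega> \<psi>"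
  unfolding Ssum_def using sum.ub_add_nat[of i m "\<lambda>l. W l \<omega> \<psi>" "k - m"] by simp

text \<open>For m = i the left block i..m-1 is empty, and Mmax of an empty block is unspecified.\<close>
lemma Mmax_split:
  assumes "i \<le> m" "m < j"
  shows "Mmax W i j \<omega> \<psi> \<le> \<bar>Ssum W i m \<omega> \<psi>\<bar>
     + max (if m = i then 0 else Mmax W i (m - 1) \<omega> \<psi>) (Mmax W (m + 1) j \<omega> \<psi>)"
  unfolding Mmax_def[of W i j]
proof (rule Max.boundedI)
  show "(\<lambda>k. \<bar>Ssum W i k \<omega> \<psi>\<bar>) ` {i..j} \<noteq> {}" using assms by simp
  fix z assume "z \<in> (\<lambda>k. \<bar>Ssum W i k \<omega> \<psi>\<bar>) ` {i..j}"
  then obtain k where k: "k \<in> {i..j}" "z = \<bar>Ssum W i k \<omega> \<psi>\<bar>" by blast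
  have right: "0 \<le> Mmax W (m + 1) j \<omega> \<psi>" using assms by (intro Mmax_nonneg) simp
  consider "k < m" | "k = m" | "m < k" by linarith
  then show "z \<le> \<bar>Ssum W i m \<omega> \<psi>\<bar>
     + max (if m = i then 0 else Mmax W i (m - 1) \<omega> \<psi>) (Mmax W (m + 1) j \<omega> \<psi>)"
  proof cases
    case 1
    then have "m \<noteq> i" "z \<le> Mmax W i (m - 1) \<omega> \<psi>" using k by (auto intro: Mmax_ge)
    then show ?thesis by (smt (verit) abs_ge_zero)
  next
    case 2
    then show ?thesis using k right by (simp add: max_def)
  next
    case 3
    have "z \<le> \<bar>Ssum W i m \<omega> \<psi>\<bar> + \<bar>Ssum W (m + 1) k \<omega> \<psi>\<bar>"
      using k Ssum_split[OF assms(1) 3, of W \<omega> \<psi>] by simp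
    also have "\<bar>Ssum W (m + 1) k \<omega> \<psi>\<bar> \<le> Mmax W (m + 1) j \<omega> \<psi>"
      using k 3 by (intro Mmax_ge) auto
    finally show ?thesis by (simp add: max_def)
  qed
qed (simp)

lemma outer_exp_Mmax_powr_split:
  fixes \<nu> C1 C2 r1 r2 r3 :: real and M :: "'a measure" and W :: "nat \<Rightarrow> 'a \<Rightarrow> 'p \<Rightarrow> real"
  assumes "0 \<le> \<nu>" "\<Psi> \<noteq> {}" "i \<le> m" "m < j"
    and weighted: "\<And>x y. 0 \<le> x \<Longrightarrow> 0 \<le> y \<Longrightarrow> (x + y) powr \<nu> \<le> C1 * x powr \<nu> + C2 * y powr \<nu>"
    and left_sum: "outer_exp M (\<lambda>\<omega>. SUP \<psi>\<in>\<Psi>. ereal (\<bar>Ssum W i m \<omega> \<psi>\<bar> powr \<nu>)) \<le> ereal r1"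
    and left_max: "m \<noteq> i \<Longrightarrow>
      outer_exp M (\<lambda>\<omega>. SUP \<psi>\<in>\<Psi>. ereal (\<bar>Mmax W i (m - 1) \<omega> \<psi>\<bar> powr \<nu>)) \<le> ereal r2"
    and "0 \<le> r2"
    and right_max: "outer_exp M (\<lambda>\<omega>. SUP \<psi>\<in>\<Psi>. ereal (\<bar>Mmax W (m + 1) j \<omega> \<psi>\<bar> powr \<nu>)) \<le> ereal r3"
  shows "outer_exp M (\<lambda>\<omega>. SUP \<psi>\<in>\<Psi>. ereal (\<bar>Mmax W i j \<omega> \<psi>\<bar> powr \<nu>))
    \<le> ereal (C1 * r1 + C2 * (r2 + r3))"
proof -
  have C: "0 \<le> C1" "0 \<le> C2" using weighted[of 1 0] weighted[of 0 1] by auto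
  define Y where "Y f \<omega> = (SUP \<psi>\<in>\<Psi>. ereal (\<bar>f \<omega> \<psi>\<bar> powr \<nu>))"
    for f :: "'a \<Rightarrow> 'p \<Rightarrow> real" and \<omega>
  define P where "P \<omega> \<psi> = (if m = i then 0 else Mmax W i (m - 1) \<omega> \<psi>)" for \<omega> \<psi>
  have Y_upper: "ereal (\<bar>f \<omega> \<psi>\<bar> powr \<nu>) \<le> Y f \<omega>" if "\<psi> \<in> \<Psi>" for f \<omega> \<psi>
    unfolding Y_def using that by (rule SUP_upper)
  have Y_nonneg: "\<forall>\<omega>\<in>space M. 0 \<le> Y f \<omega>" for f
    using Y_upper assms(2) by (meson ex_in_conv order.trans ereal_less_eq(5) powr_ge_zero)
  have pointwise: "\<bar>Mmax W i j \<omega> \<psi>\<bar> powr \<nu>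
      \<le> C1 * \<bar>Ssum W i m \<omega> \<psi>\<bar> powr \<nu> + C2 * (\<bar>P \<omega> \<psi>\<bar> powr \<nu> + \<bar>Mmax W (m + 1) j \<omega> \<psi>\<bar> powr \<nu>)"
    for \<omega> \<psi>
  proof -
    define x p q where "x = \<bar>Ssum W i m \<omega> \<psi>\<bar>" "p = \<bar>P \<omega> \<psi>\<bar>" "q = \<bar>Mmax W (m + 1) j \<omega> \<psi>\<bar>"
    have "0 \<le> P \<omega> \<psi>" "0 \<le> Mmax W (m + 1) j \<omega> \<psi>" "0 \<le> Mmax W i j \<omega> \<psi>"
      using assms(3,4) by (auto simp: P_def intro: Mmax_nonneg)
    then have "\<bar>Mmax W i j \<omega> \<psi>\<bar> \<le> x + max p q"
      using Mmax_split[OF assms(3,4), of W \<omega> \<psi>] by (simp add: x_p_q_def P_def)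
    then have "\<bar>Mmax W i j \<omega> \<psi>\<bar> powr \<nu> \<le> (x + max p q) powr \<nu>"
      using assms(1) by (intro powr_mono2) auto
    also have "\<dots> \<le> C1 * x powr \<nu> + C2 * (max p q) powr \<nu>"
      by (intro weighted) (auto simp: x_p_q_def)
    also have "\<dots> \<le> C1 * x powr \<nu> + C2 * (p powr \<nu> + q powr \<nu>)"
      using C(2) by (intro add_left_mono mult_left_mono) (auto simp: max_def)
    finally show ?thesis unfolding x_p_q_def .
  qed
  have bound: "\<forall>\<omega>\<in>space M. Y (Mmax W i j) \<omega>
      \<le> ereal C1 * Y (Ssum W i m) \<omega> + ereal C2 * (Y P \<omega> + Y (Mmax W (m + 1) j) \<omega>)"
  proof (intro ballI)
    fix \<omega>
    show "Y (Mmax W i j) \<omega> \<le> ereal C1 * Y (Ssum W i m) \<omega> + ereal C2 * (Y P \<omega> + Y (Mmax W (m + 1) j) \<omega>)"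
      unfolding Y_def[of "Mmax W i j"]
    proof (rule SUP_least)
      fix \<psi> assume "\<psi> \<in> \<Psi>"
      have "ereal (\<bar>Mmax W i j \<omega> \<psi>\<bar> powr \<nu>)
          \<le> ereal C1 * ereal (\<bar>Ssum W i m \<omega> \<psi>\<bar> powr \<nu>)
            + ereal C2 * (ereal (\<bar>P \<omega> \<psi>\<bar> powr \<nu>) + ereal (\<bar>Mmax W (m + 1) j \<omega> \<psi>\<bar> powr \<nu>))"
        using pointwise[of \<omega> \<psi>] by simp
      also have "\<dots> \<le> ereal C1 * Y (Ssum W i m) \<omega> + ereal C2 * (Y P \<omega> + Y (Mmax W (m + 1) j) \<omega>)"
        using C \<open>\<psi> \<in> \<Psi>\<close> by (intro add_mono ereal_mult_left_mono Y_upper) auto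
      finally show "ereal (\<bar>Mmax W i j \<omega> \<psi>\<bar> powr \<nu>) \<le> \<dots>" .
    qed
  qed
  have "outer_exp M (Y P) \<le> ereal r2"
  proof (cases "m = i")
    case True
    then have "Y P = (\<lambda>_. 0)" using assms(2) by (simp add: Y_def P_def fun_eq_iff)
    then show ?thesis using outer_exp_zero[of M] \<open>0 \<le> r2\<close> by (simp add: order_trans)
  next
    case False
    then show ?thesis using left_max by (simp add: Y_def[abs_def] P_def[abs_def])
  qed
  moreover have "outer_exp M (Y (Ssum W i m)) \<le> ereal r1"
    "outer_exp M (Y (Mmax W (m + 1) j)) \<le> ereal r3"
    using left_sum right_max by (simp_all add: Y_def[abs_def])
  ultimately have "outer_exp M (\<lambda>\<omega>. ereal C1 * Y (Ssum W i m) \<omega> + ereal C2 * (Y P \<omega> + Y (Mmax W (m + 1) j) \<omega>))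
      \<le> ereal (C1 * r1 + C2 * (r2 + r3))"
    using C Y_nonneg
    by (intro outer_exp_add outer_exp_cmult) (auto intro: mult_nonneg_nonneg add_nonneg_nonneg)
  moreover have "outer_exp M (Y (Mmax W i j))
      \<le> outer_exp M (\<lambda>\<omega>. ereal C1 * Y (Ssum W i m) \<omega> + ereal C2 * (Y P \<omega> + Y (Mmax W (m + 1) j) \<omega>))"
    using bound by (rule outer_exp_mono)
  ultimately show ?thesis unfolding Y_def[abs_def] by simp
qed

lemma outer_exp_Mmax_powr_le:
  fixes \<alpha> \<nu> Q C1 C2 A :: real and g :: "nat \<Rightarrow> real"
  assumes "0 \<le> \<nu>" "\<Psi> \<noteq> {}" and S: "cond_S \<alpha> g Q"
    and Ssum_bound: "\<And>i j. 1 \<le> i \<Longrightarrow> i \<le> j \<Longrightarrow> j \<le> n \<Longrightarrow>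
      outer_exp M (\<lambda>\<omega>. SUP \<psi>\<in>\<Psi>. ereal (\<bar>Ssum W i j \<omega> \<psi>\<bar> powr \<nu>)) \<le> ereal (g (j - i + 1) powr \<alpha>)"
    and weighted: "\<And>x y. 0 \<le> x \<Longrightarrow> 0 \<le> y \<Longrightarrow> (x + y) powr \<nu> \<le> C1 * x powr \<nu> + C2 * y powr \<nu>"
    and "1 \<le> A" and A: "C1 + 2 * C2 * (Q / 2) powr \<alpha> * A \<le> A"
  shows "1 \<le> i \<Longrightarrow> i \<le> j \<Longrightarrow> j \<le> n \<Longrightarrow>
    outer_exp M (\<lambda>\<omega>. SUP \<psi>\<in>\<Psi>. ereal (\<bar>Mmax W i j \<omega> \<psi>\<bar> powr \<nu>)) \<le> ereal (A * g (j - i + 1) powr \<alpha>)"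
proof (induction "j - i" arbitrary: i j rule: less_induct)
  case less
  define N where "N = j - i + 1"
  define G where "G = g N powr \<alpha>"
  define K where "K = (Q / 2) powr \<alpha>"
  show ?case
  proof (cases "i = j")
    case True
    then have "outer_exp M (\<lambda>\<omega>. SUP \<psi>\<in>\<Psi>. ereal (\<bar>Mmax W i j \<omega> \<psi>\<bar> powr \<nu>))
        \<le> ereal (g (j - i + 1) powr \<alpha>)"
      using Ssum_bound[of i j] less.prems by (simp add: Mmax_same)
    also have "\<dots> \<le> ereal (A * g (j - i + 1) powr \<alpha>)"
      using \<open>1 \<le> A\<close> by (simp add: mult_le_cancel_right1)
    finally show ?thesis .
  next
    case False
    define m where "m = i + (N - 1) div 2"
    have m: "i \<le> m" "m < j" using False less.prems unfolding m_def N_def by auto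
    have IH_bound: "outer_exp M (\<lambda>\<omega>. SUP \<psi>\<in>\<Psi>. ereal (\<bar>Mmax W k l \<omega> \<psi>\<bar> powr \<nu>)) \<le> ereal (A * K * G)"
      if "i \<le> k" "k \<le> l" "l \<le> j" "2 * (l - k + 1) \<le> N" "l - k < j - i" for k l
    proof -
      have "outer_exp M (\<lambda>\<omega>. SUP \<psi>\<in>\<Psi>. ereal (\<bar>Mmax W k l \<omega> \<psi>\<bar> powr \<nu>)) \<le> ereal (A * g (l - k + 1) powr \<alpha>)"
        using that less by auto
      also have "A * g (l - k + 1) powr \<alpha> \<le> A * K * G"
        using cond_S_powr_half[OF S, of "l - k + 1" N] that \<open>1 \<le> A\<close>
        unfolding K_def G_def by (simp add: mult.assoc)
      finally show ?thesis by simp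
    qed
    have "outer_exp M (\<lambda>\<omega>. SUP \<psi>\<in>\<Psi>. ereal (\<bar>Mmax W i j \<omega> \<psi>\<bar> powr \<nu>))
        \<le> ereal (C1 * G + C2 * (A * K * G + A * K * G))"
    proof (rule outer_exp_Mmax_powr_split[OF assms(1,2) m weighted])
      show "outer_exp M (\<lambda>\<omega>. SUP \<psi>\<in>\<Psi>. ereal (\<bar>Ssum W i m \<omega> \<psi>\<bar> powr \<nu>)) \<le> ereal G"
        using Ssum_bound[of i m] cond_S_powr_mono[OF S, of "m - i + 1" N] m less.prems
        unfolding G_def N_def by (auto intro: order_trans)
      show "outer_exp M (\<lambda>\<omega>. SUP \<psi>\<in>\<Psi>. ereal (\<bar>Mmax W i (m - 1) \<omega> \<psi>\<bar> powr \<nu>)) \<le> ereal (A * K * G)"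
        if "m \<noteq> i" using that m by (intro IH_bound) (auto simp: m_def N_def)
      show "outer_exp M (\<lambda>\<omega>. SUP \<psi>\<in>\<Psi>. ereal (\<bar>Mmax W (m + 1) j \<omega> \<psi>\<bar> powr \<nu>)) \<le> ereal (A * K * G)"
        using m by (intro IH_bound) (auto simp: m_def N_def)
      show "0 \<le> A * K * G" using \<open>1 \<le> A\<close> unfolding K_def G_def by simp
    qed
    also have "C1 * G + C2 * (A * K * G + A * K * G) = (C1 + 2 * C2 * K * A) * G"
      by (simp add: algebra_simps)
    also have "\<dots> \<le> A * G"
      using A unfolding K_def G_def by (intro mult_right_mono) auto
    finally show ?thesis unfolding G_def N_def by simp
  qed
qed

theorem proposition2p1:
  fixes \<alpha> \<nu> Q :: real
  assumes "\<alpha> > 1" and "\<nu> \<ge> 1" and "1 \<le> Q" and "Q < 2 powr ((\<alpha> - 1) / \<alpha>)"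
  shows "\<exists>A::real. \<forall>(M::'a measure) (\<Psi>::'p set) (n::nat) (W::nat \<Rightarrow> 'a \<Rightarrow> 'p \<Rightarrow> real)
            (g::nat \<Rightarrow> real).
    prob_space M \<and> \<Psi> \<noteq> {} \<and>
    (\<forall>k\<in>{1..n}. \<forall>\<omega>\<in>space M. bounded (W k \<omega> ` \<Psi>)) \<and>
    cond_S \<alpha> g Q \<and>
    (\<forall>i j. 1 \<le> i \<and> i \<le> j \<and> j \<le> n \<longrightarrow>
       outer_exp M (\<lambda>\<omega>. SUP \<psi>\<in>\<Psi>. ereal (\<bar>Ssum W i j \<omega> \<psi>\<bar> powr \<nu>))
         \<le> ereal (g (j - i + 1) powr \<alpha>))
    \<longrightarrow>
    (\<forall>i j. 1 \<le> i \<and> i \<le> j \<and> j \<le> n \<longrightarrow>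
       outer_exp M (\<lambda>\<omega>. SUP \<psi>\<in>\<Psi>. ereal (\<bar>Mmax W i j \<omega> \<psi>\<bar> powr \<nu>))
         \<le> ereal (A * g (j - i + 1) powr \<alpha>))"
proof -
  define c where "c = 2 * (Q / 2) powr \<alpha>"
  have "0 < c" "c < 1"
    using two_mult_half_powr_less_one[of \<alpha> Q] assms unfolding c_def by auto
  then obtain C1 C2 where C2: "C2 * c < 1" and
    weighted: "\<And>x y. 0 \<le> x \<Longrightarrow> 0 \<le> y \<Longrightarrow> (x + y) powr \<nu> \<le> C1 * x powr \<nu> + C2 * y powr \<nu>"
    using powr_add_le_contracting assms(2) by metis
  define A where "A = max 1 (C1 / (1 - C2 * c))"
  have "C1 / (1 - C2 * c) \<le> A" by (simp add: A_def)
  then have "C1 \<le> A * (1 - C2 * c)" using C2 by (simp add: divide_le_eq)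
  then have "C1 + 2 * C2 * (Q / 2) powr \<alpha> * A \<le> A" unfolding c_def by (simp add: algebra_simps)
  then have "outer_exp M (\<lambda>\<omega>. SUP \<psi>\<in>\<Psi>. ereal (\<bar>Mmax W i j \<omega> \<psi>\<bar> powr \<nu>))
      \<le> ereal (A * g (j - i + 1) powr \<alpha>)"
    if "\<Psi> \<noteq> {}" "cond_S \<alpha> g Q" "1 \<le> i" "i \<le> j" "j \<le> n"
      and "\<forall>i j. 1 \<le> i \<and> i \<le> j \<and> j \<le> n \<longrightarrow>
        outer_exp M (\<lambda>\<omega>. SUP \<psi>\<in>\<Psi>. ereal (\<bar>Ssum W i j \<omega> \<psi>\<bar> powr \<nu>)) \<le> ereal (g (j - i + 1) powr \<alpha>)"
    for M :: "'a measure" and \<Psi> :: "'p set" and n W g i j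
    using that assms(2) by (intro outer_exp_Mmax_powr_le[OF _ _ _ _ weighted]) (auto simp: A_def)
  then show ?thesis by blast
qed

end
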